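(* Let $(H,\cdot,1,\Delta,\varepsilon,\rhd)$ be a right Post-Hopf algebra which is connected as a coalgebra, with coradical filtration $(H^{\leq n})_{n\in\mathbb{N}}$. Then for every $n\in\mathbb{N}$, $H^{\leq n}\rhd H\subseteq H^{\leq n}$.
   Context: With $\rho(x)=x-\varepsilon(x)1$, $\tilde\Delta(x)=\Delta(x)-1\otimes x-x\otimes 1$ on $\ker\varepsilon$, $\tilde\Delta(1)=0$, $\tilde\Delta^{(0)}=\rho$, $\tilde\Delta^{(1)}=\tilde\Delta$, $\tilde\Delta^{(k)}=(\tilde\Delta\otimes\mathrm{Id}^{\otimes k-1})\circ\tilde\Delta^{(k-1)}$: $H$ is connected as a coalgebra if every $x$ satisfies $\tilde\Delta^{(n)}(x)=0$ for some $n$, and $H^{\leq n}=\{x\in H:\tilde\Delta^{(n)}(x)=0\}$. A right Post-Hopf algebra is a Hopf algebra $(H,\cdot,1,\Delta,\varepsilon)$ with a coalgebra morphism $\rhd:H\otimes H\to H$ such that $(x\cdot y)\rhd z=(x\rhd z^{(1)})\cdot(y\rhd z^{(2)})$, $(x\rhd y)\rhd z=x\rhd\big((y\rhd z^{(1)})\cdot z^{(2)}\big)$ (Sweedler notation), and $\gamma_\rhd(x)(y)=y\rhd x$ is invertible in the convolution algebra $\mathrm{Hom}(H,\mathrm{End}(H))$ with product $(f\star g)(x)=f(x^{(1)})\circ g(x^{(2)})$. *)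

theory Defs
  imports "HOL-Library.Poly_Mapping"
begin

(*
  Vector spaces over a field 'k are modelled as free vector spaces with a chosen basis:
  H = ('b \<Rightarrow>\<^sub>0 'k) (finitely supported functions on the basis 'b).
  Since every vector space has a basis, this loses no generality.
  Tensor products are free vector spaces on products of the bases:
  H \<otimes> H = ('b \<times> 'b \<Rightarrow>\<^sub>0 'k), H \<otimes> H \<otimes> H = ('b \<times> 'b \<times> 'b \<Rightarrow>\<^sub>0 'k),
  and H^{\<otimes> m} = ('b list \<Rightarrow>\<^sub>0 'k) restricted to Poly_Mapping.keys of length m.
*)

definition vsmul :: "'k::field \<Rightarrow> ('a \<Rightarrow>\<^sub>0 'k) \<Rightarrow> ('a \<Rightarrow>\<^sub>0 'k)" where
  "vsmul c x = Poly_Mapping.map (\<lambda>a. c * a) x"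

definition basisv :: "'a \<Rightarrow> ('a \<Rightarrow>\<^sub>0 'k::field)" where
  "basisv i = Poly_Mapping.single i 1"

definition linear_map :: "(('a \<Rightarrow>\<^sub>0 'k::field) \<Rightarrow> ('c \<Rightarrow>\<^sub>0 'k)) \<Rightarrow> bool" where
  "linear_map f \<longleftrightarrow> (\<forall>x y. f (x + y) = f x + f y) \<and> (\<forall>c x. f (vsmul c x) = vsmul c (f x))"

definition linear_functional :: "(('a \<Rightarrow>\<^sub>0 'k::field) \<Rightarrow> 'k) \<Rightarrow> bool" where
  "linear_functional f \<longleftrightarrow> (\<forall>x y. f (x + y) = f x + f y) \<and> (\<forall>c x. f (vsmul c x) = c * f x)"

definition bilinear_map ::
  "(('a \<Rightarrow>\<^sub>0 'k::field) \<Rightarrow> ('c \<Rightarrow>\<^sub>0 'k) \<Rightarrow> ('d \<Rightarrow>\<^sub>0 'k)) \<Rightarrow> bool" where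
  "bilinear_map f \<longleftrightarrow> (\<forall>x. linear_map (f x)) \<and> (\<forall>y. linear_map (\<lambda>x. f x y))"

definition tens :: "('a \<Rightarrow>\<^sub>0 'k::field) \<Rightarrow> ('c \<Rightarrow>\<^sub>0 'k) \<Rightarrow> ('a \<times> 'c \<Rightarrow>\<^sub>0 'k)" where
  "tens x y = (\<Sum>i\<in>Poly_Mapping.keys x. (\<Sum>j\<in>Poly_Mapping.keys y. Poly_Mapping.single (i, j) (Poly_Mapping.lookup x i * Poly_Mapping.lookup y j)))"

(*Sweedler-type evaluation: for t = \<Sum> t_(i,j) e_i \<otimes> e_j and f bilinear,
  sw2 t f = \<Sum> t_(i,j) f e_i e_j, i.e. the linear map on A \<otimes> C induced by f, applied to t.
  In particular sw2 (\<Delta> x) f = \<Sum> f x(1) x(2).*)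
definition sw2 :: "('a \<times> 'c \<Rightarrow>\<^sub>0 'k::field) \<Rightarrow>
    (('a \<Rightarrow>\<^sub>0 'k) \<Rightarrow> ('c \<Rightarrow>\<^sub>0 'k) \<Rightarrow> ('d \<Rightarrow>\<^sub>0 'k)) \<Rightarrow> ('d \<Rightarrow>\<^sub>0 'k)" where
  "sw2 t f = (\<Sum>p\<in>Poly_Mapping.keys t. vsmul (Poly_Mapping.lookup t p) (f (basisv (fst p)) (basisv (snd p))))"

definition sw2s :: "('a \<times> 'c \<Rightarrow>\<^sub>0 'k::field) \<Rightarrow>
    (('a \<Rightarrow>\<^sub>0 'k) \<Rightarrow> ('c \<Rightarrow>\<^sub>0 'k) \<Rightarrow> 'k) \<Rightarrow> 'k" where
  "sw2s t f = (\<Sum>p\<in>Poly_Mapping.keys t. Poly_Mapping.lookup t p * f (basisv (fst p)) (basisv (snd p)))"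

definition reassoc :: "(('a \<times> 'b) \<times> 'c \<Rightarrow>\<^sub>0 'k::field) \<Rightarrow> ('a \<times> 'b \<times> 'c \<Rightarrow>\<^sub>0 'k)" where
  "reassoc t = (\<Sum>p\<in>Poly_Mapping.keys t. Poly_Mapping.single (fst (fst p), snd (fst p), snd p) (Poly_Mapping.lookup t p))"

definition hopf_algebra ::
  "(('b \<Rightarrow>\<^sub>0 'k::field) \<Rightarrow> ('b \<Rightarrow>\<^sub>0 'k) \<Rightarrow> ('b \<Rightarrow>\<^sub>0 'k)) \<Rightarrow> ('b \<Rightarrow>\<^sub>0 'k) \<Rightarrow>
   (('b \<Rightarrow>\<^sub>0 'k) \<Rightarrow> ('b \<times> 'b \<Rightarrow>\<^sub>0 'k)) \<Rightarrow> (('b \<Rightarrow>\<^sub>0 'k) \<Rightarrow> 'k) \<Rightarrow> bool" where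
  "hopf_algebra mult u \<Delta> \<epsilon> \<longleftrightarrow>
     bilinear_map mult \<and>
     (\<forall>x y z. mult (mult x y) z = mult x (mult y z)) \<and>
     (\<forall>x. mult u x = x \<and> mult x u = x) \<and>
     linear_map \<Delta> \<and> linear_functional \<epsilon> \<and>
     (\<forall>x. reassoc (sw2 (\<Delta> x) (\<lambda>a b. tens (\<Delta> a) b)) = sw2 (\<Delta> x) (\<lambda>a b. tens a (\<Delta> b))) \<and>
     (\<forall>x. sw2 (\<Delta> x) (\<lambda>a b. vsmul (\<epsilon> a) b) = x \<and> sw2 (\<Delta> x) (\<lambda>a b. vsmul (\<epsilon> b) a) = x) \<and>
     (\<forall>x y. \<Delta> (mult x y) = sw2 (\<Delta> x) (\<lambda>a b. sw2 (\<Delta> y) (\<lambda>c d. tens (mult a c) (mult b d)))) \<and>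
     \<Delta> u = tens u u \<and>
     (\<forall>x y. \<epsilon> (mult x y) = \<epsilon> x * \<epsilon> y) \<and> \<epsilon> u = 1 \<and>
     (\<exists>S. linear_map S \<and>
        (\<forall>x. sw2 (\<Delta> x) (\<lambda>a b. mult (S a) b) = vsmul (\<epsilon> x) u \<and>
             sw2 (\<Delta> x) (\<lambda>a b. mult a (S b)) = vsmul (\<epsilon> x) u))"

(*Right Post-Hopf algebra: rhd x y = x \<rhd> y, a coalgebra morphism H \<otimes> H \<rightarrow> H
  (given as a bilinear map), with the two axioms, and \<gamma>(x)(y) = y \<rhd> x invertible in the
  convolution algebra Hom(H, End(H)) (whose unit is x \<mapsto> \<epsilon>(x) id).*)
definition right_post_hopf_algebra ::
  "(('b \<Rightarrow>\<^sub>0 'k::field) \<Rightarrow> ('b \<Rightarrow>\<^sub>0 'k) \<Rightarrow> ('b \<Rightarrow>\<^sub>0 'k)) \<Rightarrow> ('b \<Rightarrow>\<^sub>0 'k) \<Rightarrow>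
   (('b \<Rightarrow>\<^sub>0 'k) \<Rightarrow> ('b \<times> 'b \<Rightarrow>\<^sub>0 'k)) \<Rightarrow> (('b \<Rightarrow>\<^sub>0 'k) \<Rightarrow> 'k) \<Rightarrow>
   (('b \<Rightarrow>\<^sub>0 'k) \<Rightarrow> ('b \<Rightarrow>\<^sub>0 'k) \<Rightarrow> ('b \<Rightarrow>\<^sub>0 'k)) \<Rightarrow> bool" where
  "right_post_hopf_algebra mult u \<Delta> \<epsilon> rhd \<longleftrightarrow>
     hopf_algebra mult u \<Delta> \<epsilon> \<and>
     bilinear_map rhd \<and>
     (\<forall>x y. \<Delta> (rhd x y) = sw2 (\<Delta> x) (\<lambda>a b. sw2 (\<Delta> y) (\<lambda>c d. tens (rhd a c) (rhd b d)))) \<and>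
     (\<forall>x y. \<epsilon> (rhd x y) = \<epsilon> x * \<epsilon> y) \<and>
     (\<forall>x y z. rhd (mult x y) z = sw2 (\<Delta> z) (\<lambda>c d. mult (rhd x c) (rhd y d))) \<and>
     (\<forall>x y z. rhd (rhd x y) z = rhd x (sw2 (\<Delta> z) (\<lambda>c d. mult (rhd y c) d))) \<and>
     (\<exists>\<beta>. bilinear_map \<beta> \<and>
        (\<forall>x y. sw2 (\<Delta> x) (\<lambda>a b. rhd (\<beta> b y) a) = vsmul (\<epsilon> x) y \<and>
               sw2 (\<Delta> x) (\<lambda>a b. \<beta> a (rhd y b)) = vsmul (\<epsilon> x) y))"

definition rho_map :: "('b \<Rightarrow>\<^sub>0 'k::field) \<Rightarrow> (('b \<Rightarrow>\<^sub>0 'k) \<Rightarrow> 'k) \<Rightarrow> ('b \<Rightarrow>\<^sub>0 'k) \<Rightarrow> ('b \<Rightarrow>\<^sub>0 'k)" where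
  "rho_map u \<epsilon> x = x - vsmul (\<epsilon> x) u"

(*Reduced coproduct: the unique linear map equal to \<Delta>(x) - 1\<otimes>x - x\<otimes>1 on ker \<epsilon>
  and sending 1 to 0.*)
definition red_coprod :: "('b \<Rightarrow>\<^sub>0 'k::field) \<Rightarrow> (('b \<Rightarrow>\<^sub>0 'k) \<Rightarrow> ('b \<times> 'b \<Rightarrow>\<^sub>0 'k)) \<Rightarrow>
    (('b \<Rightarrow>\<^sub>0 'k) \<Rightarrow> 'k) \<Rightarrow> ('b \<Rightarrow>\<^sub>0 'k) \<Rightarrow> ('b \<times> 'b \<Rightarrow>\<^sub>0 'k)" where
  "red_coprod u \<Delta> \<epsilon> x = \<Delta> x - tens u x - tens x u + vsmul (\<epsilon> x) (tens u u)"

(*Iterated reduced coproduct \<Delta>~^(n) : H \<rightarrow> H^{\<otimes>(n+1)}, tensor words as lists;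
  \<Delta>~^(0) = \<rho>, \<Delta>~^(k) = (\<Delta>~ \<otimes> Id^{\<otimes> k-1}) \<circ> \<Delta>~^(k-1) (\<Delta>~ applied to the first factor).*)
fun iter_red_coprod :: "('b \<Rightarrow>\<^sub>0 'k::field) \<Rightarrow> (('b \<Rightarrow>\<^sub>0 'k) \<Rightarrow> ('b \<times> 'b \<Rightarrow>\<^sub>0 'k)) \<Rightarrow>
    (('b \<Rightarrow>\<^sub>0 'k) \<Rightarrow> 'k) \<Rightarrow> nat \<Rightarrow> ('b \<Rightarrow>\<^sub>0 'k) \<Rightarrow> ('b list \<Rightarrow>\<^sub>0 'k)" where
  "iter_red_coprod u \<Delta> \<epsilon> 0 x =
     (\<Sum>i\<in>Poly_Mapping.keys (rho_map u \<epsilon> x). Poly_Mapping.single [i] (Poly_Mapping.lookup (rho_map u \<epsilon> x) i))"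
| "iter_red_coprod u \<Delta> \<epsilon> (Suc k) x =
     (let T = iter_red_coprod u \<Delta> \<epsilon> k x in
      \<Sum>w\<in>Poly_Mapping.keys T. vsmul (Poly_Mapping.lookup T w)
        (let D = red_coprod u \<Delta> \<epsilon> (basisv (hd w)) in
         \<Sum>p\<in>Poly_Mapping.keys D. Poly_Mapping.single (fst p # snd p # tl w) (Poly_Mapping.lookup D p)))"

definition coalg_connected :: "('b \<Rightarrow>\<^sub>0 'k::field) \<Rightarrow> (('b \<Rightarrow>\<^sub>0 'k) \<Rightarrow> ('b \<times> 'b \<Rightarrow>\<^sub>0 'k)) \<Rightarrow>
    (('b \<Rightarrow>\<^sub>0 'k) \<Rightarrow> 'k) \<Rightarrow> bool" where
  "coalg_connected u \<Delta> \<epsilon> \<longleftrightarrow> (\<forall>x. \<exists>n. iter_red_coprod u \<Delta> \<epsilon> n x = 0)"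

definition coradical_filt :: "('b \<Rightarrow>\<^sub>0 'k::field) \<Rightarrow> (('b \<Rightarrow>\<^sub>0 'k) \<Rightarrow> ('b \<times> 'b \<Rightarrow>\<^sub>0 'k)) \<Rightarrow>
    (('b \<Rightarrow>\<^sub>0 'k) \<Rightarrow> 'k) \<Rightarrow> nat \<Rightarrow> ('b \<Rightarrow>\<^sub>0 'k) set" where
  "coradical_filt u \<Delta> \<epsilon> n = {x. iter_red_coprod u \<Delta> \<epsilon> n x = 0}"

end

theory Submission
  imports Defs
begin

text \<open>Let \<open>\<rhd>\<close> act letterwise on pairs of tensor words and write \<open>\<Delta>\<^sup>n\<close> for the
  iterated full coproduct. Since \<open>\<rhd>\<close> is a coalgebra morphism and \<open>1 \<rhd> z = \<epsilon>(z) 1\<close>,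
  the terms \<open>1 \<otimes> x\<close>, \<open>x \<otimes> 1\<close> and \<open>1 \<otimes> 1\<close> of the reduced coproduct of \<open>x\<close> are carried
  to the corresponding terms for \<open>x \<rhd> y\<close>, whence \<open>\<Delta>~(x \<rhd> y) = \<Delta>~(x) \<rhd> \<Delta>(y)\<close>.
  Applying this on the first tensor factor gives inductively
  \<open>\<Delta>~\<^sup>n(x \<rhd> y) = \<Delta>~\<^sup>n(x) \<rhd> \<Delta>\<^sup>n(y)\<close>, so \<open>\<Delta>~\<^sup>n(x) = 0\<close> forces \<open>\<Delta>~\<^sup>n(x \<rhd> y) = 0\<close>.\<close>

lemma lookup_vsmul [simp]: "Poly_Mapping.lookup (vsmul c x) k = c * Poly_Mapping.lookup x k"
  by (simp add: vsmul_def Poly_Mapping.map.rep_eq when_def)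

lemma vsmul_zero [simp]: "vsmul 0 x = 0" "vsmul c 0 = 0"
  by (auto intro!: poly_mapping_eqI)

lemma vsmul_one [simp]: "vsmul 1 x = x"
  by (auto intro!: poly_mapping_eqI)

lemma vsmul_minus_one: "vsmul (-1) x = - x"
  by (auto intro!: poly_mapping_eqI)

lemma vsmul_add_right: "vsmul c (x + y) = vsmul c x + vsmul c y"
  by (auto intro!: poly_mapping_eqI simp: lookup_add algebra_simps)

lemma vsmul_add_left: "vsmul (c + d) x = vsmul c x + vsmul d x"
  by (auto intro!: poly_mapping_eqI simp: lookup_add algebra_simps)

lemma vsmul_diff_right: "vsmul c (x - y) = vsmul c x - vsmul c y"
  by (rule poly_mapping_eqI) (simp only: lookup_minus lookup_vsmul right_diff_distrib)

lemma vsmul_vsmul [simp]: "vsmul c (vsmul d x) = vsmul (c * d) x"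
  by (auto intro!: poly_mapping_eqI simp: algebra_simps)

lemma vsmul_sum: "vsmul c (sum f A) = (\<Sum>a\<in>A. vsmul c (f a))"
  by (induct A rule: infinite_finite_induct) (auto simp: vsmul_add_right)

lemma vsmul_single: "vsmul c (Poly_Mapping.single p d) = Poly_Mapping.single p (c * d)"
  by (auto intro!: poly_mapping_eqI simp: lookup_single when_def)

lemma vsmul_basisv: "vsmul c (basisv p) = Poly_Mapping.single p c"
  by (simp add: basisv_def vsmul_single)

definition lin_ext :: "('a \<Rightarrow> ('c \<Rightarrow>\<^sub>0 'k::field)) \<Rightarrow> ('a \<Rightarrow>\<^sub>0 'k) \<Rightarrow> ('c \<Rightarrow>\<^sub>0 'k)" where
  "lin_ext g t = (\<Sum>p\<in>Poly_Mapping.keys t. vsmul (Poly_Mapping.lookup t p) (g p))"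

lemma lin_ext_eq_sum_superset:
  assumes "finite S" "Poly_Mapping.keys t \<subseteq> S"
  shows "lin_ext g t = (\<Sum>p\<in>S. vsmul (Poly_Mapping.lookup t p) (g p))"
  unfolding lin_ext_def
  by (rule sum.mono_neutral_left) (use assms in \<open>auto simp: in_keys_iff\<close>)

lemma lin_ext_add: "lin_ext g (x + y) = lin_ext g x + lin_ext g y"
proof -
  let ?S = "Poly_Mapping.keys x \<union> Poly_Mapping.keys y"
  have "Poly_Mapping.keys (x + y) \<subseteq> ?S" by (rule keys_add)
  then show ?thesis
    by (subst (1 2 3) lin_ext_eq_sum_superset[where S = ?S])
       (auto simp: lookup_add vsmul_add_left sum.distrib)
qed

lemma lin_ext_vsmul: "lin_ext g (vsmul c x) = vsmul c (lin_ext g x)"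
proof -
  have "Poly_Mapping.keys (vsmul c x) \<subseteq> Poly_Mapping.keys x" by (auto simp: in_keys_iff)
  then show ?thesis
    by (subst (1 2) lin_ext_eq_sum_superset[where S = "Poly_Mapping.keys x"]) (auto simp: vsmul_sum)
qed

lemma linear_map_lin_ext: "linear_map (lin_ext g)"
  by (simp add: linear_map_def lin_ext_add lin_ext_vsmul)

lemma lin_ext_basisv [simp]: "lin_ext g (basisv p) = g p"
  by (simp add: lin_ext_def basisv_def)

lemma lin_ext_zero [simp]: "lin_ext g 0 = 0"
  by (simp add: lin_ext_def)

lemma lin_ext_cong: "(\<And>p. p \<in> Poly_Mapping.keys t \<Longrightarrow> g p = h p) \<Longrightarrow> lin_ext g t = lin_ext h t"
  by (simp add: lin_ext_def)

lemma lin_ext_basisv_id: "lin_ext basisv t = t"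
proof (rule poly_mapping_eqI)
  fix k
  have "Poly_Mapping.lookup (lin_ext basisv t) k =
      (\<Sum>p\<in>Poly_Mapping.keys t. Poly_Mapping.lookup t p * (if p = k then 1 else 0))"
    by (simp add: lin_ext_def lookup_sum basisv_def lookup_single when_def eq_commute)
  also have "\<dots> = Poly_Mapping.lookup t k"
    by (simp add: if_distrib sum.delta in_keys_iff cong: if_cong)
  finally show "Poly_Mapping.lookup (lin_ext basisv t) k = Poly_Mapping.lookup t k" .
qed

lemma sum_single_eq_lin_ext:
  "(\<Sum>p\<in>Poly_Mapping.keys t. Poly_Mapping.single (h p) (Poly_Mapping.lookup t p)) =
    lin_ext (\<lambda>p. basisv (h p)) t"
  by (simp add: lin_ext_def vsmul_basisv)

lemma lookup_lin_ext_eq_0: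
  "(\<And>p. Poly_Mapping.lookup (g p) q = 0) \<Longrightarrow> Poly_Mapping.lookup (lin_ext g t) q = 0"
  by (simp add: lin_ext_def lookup_sum)

lemma linear_map_add: "linear_map f \<Longrightarrow> f (x + y) = f x + f y"
  by (simp add: linear_map_def)

lemma linear_map_vsmul: "linear_map f \<Longrightarrow> f (vsmul c x) = vsmul c (f x)"
  by (simp add: linear_map_def)

lemma linear_map_zero: "linear_map f \<Longrightarrow> f 0 = 0"
  using linear_map_vsmul[of f 0 0] by simp

lemma linear_map_diff: "linear_map f \<Longrightarrow> f (x - y) = f x - f y"
  using linear_map_add[of f x "- y"] linear_map_vsmul[of f "-1" y] by (simp add: vsmul_minus_one)

lemma linear_map_sum: "linear_map f \<Longrightarrow> f (sum g A) = (\<Sum>a\<in>A. f (g a))"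
  by (induct A rule: infinite_finite_induct) (auto simp: linear_map_zero linear_map_add)

lemma linear_map_comp_lin_ext: "linear_map f \<Longrightarrow> f (lin_ext g t) = lin_ext (\<lambda>p. f (g p)) t"
  by (simp add: lin_ext_def linear_map_sum linear_map_vsmul)

lemma linear_map_eq_lin_ext: "linear_map f \<Longrightarrow> f t = lin_ext (\<lambda>p. f (basisv p)) t"
  using linear_map_comp_lin_ext[of f basisv t] by (simp add: lin_ext_basisv_id)

lemma linear_map_eqI:
  assumes "linear_map f" "linear_map g" "\<And>p. f (basisv p) = g (basisv p)"
  shows "f t = g t"
proof -
  have "f t = lin_ext (\<lambda>p. f (basisv p)) t" by (rule linear_map_eq_lin_ext[OF assms(1)])
  also have "\<dots> = g t" by (simp only: assms(3) linear_map_eq_lin_ext[OF assms(2), symmetric])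
  finally show ?thesis .
qed

lemma linear_map_compose: "linear_map f \<Longrightarrow> linear_map g \<Longrightarrow> linear_map (\<lambda>x. f (g x))"
  by (simp add: linear_map_def)

lemma linear_map_plus: "linear_map f \<Longrightarrow> linear_map g \<Longrightarrow> linear_map (\<lambda>x. f x + g x)"
  by (simp add: linear_map_def vsmul_add_right)

lemma linear_map_minus: "linear_map f \<Longrightarrow> linear_map g \<Longrightarrow> linear_map (\<lambda>x. f x - g x)"
  by (simp add: linear_map_def vsmul_diff_right)

lemma linear_map_vsmul_functional: "linear_functional e \<Longrightarrow> linear_map (\<lambda>x. vsmul (e x) T)"
  by (simp add: linear_map_def linear_functional_def vsmul_add_left)

lemma linear_map_lin_ext_fun: "(\<And>p. linear_map (G p)) \<Longrightarrow> linear_map (\<lambda>x. lin_ext (\<lambda>p. G p x) t)"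
  by (simp add: linear_map_def lin_ext_def vsmul_add_right sum.distrib vsmul_sum mult.commute)

lemma bilinear_eq_lin_ext:
  assumes "\<And>Y. linear_map (\<lambda>T. G T Y)" "\<And>T. linear_map (\<lambda>Y. G T Y)"
  shows "G T Y = lin_ext (\<lambda>w. lin_ext (\<lambda>v. G (basisv w) (basisv v)) Y) T"
proof -
  have "G T Y = lin_ext (\<lambda>w. G (basisv w) Y) T" by (rule linear_map_eq_lin_ext[OF assms(1)])
  then show ?thesis by (subst (asm) linear_map_eq_lin_ext[OF assms(2)])
qed

lemma bilinear_eqI:
  assumes "\<And>Y. linear_map (\<lambda>T. G T Y)" "\<And>T. linear_map (\<lambda>Y. G T Y)"
    and "\<And>Y. linear_map (\<lambda>T. H T Y)" "\<And>T. linear_map (\<lambda>Y. H T Y)"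
    and "\<And>w v. G (basisv w) (basisv v) = H (basisv w) (basisv v)"
  shows "G T Y = H T Y"
  by (subst bilinear_eq_lin_ext[of G, OF assms(1,2)], subst bilinear_eq_lin_ext[of H, OF assms(3,4)])
     (simp only: assms(5))

lemma tens_eq_lin_ext: "tens x y = lin_ext (\<lambda>i. lin_ext (\<lambda>j. basisv (i, j)) y) x"
  by (simp add: tens_def lin_ext_def vsmul_sum vsmul_basisv vsmul_single)

lemma linear_map_tens_left: "linear_map (\<lambda>x. tens x y)"
  unfolding tens_eq_lin_ext by (rule linear_map_lin_ext)

lemma linear_map_tens_right: "linear_map (\<lambda>y. tens x y)"
  unfolding tens_eq_lin_ext by (rule linear_map_lin_ext_fun) (rule linear_map_lin_ext)

lemma tens_basisv [simp]: "tens (basisv i) (basisv j) = basisv (i, j)"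
  by (simp add: tens_eq_lin_ext)

lemma tens_vsmul_left: "tens (vsmul c x) y = vsmul c (tens x y)"
  using linear_map_vsmul[OF linear_map_tens_left] .

lemma tens_vsmul_right: "tens x (vsmul c y) = vsmul c (tens x y)"
  using linear_map_vsmul[OF linear_map_tens_right] .

lemma sw2_eq_lin_ext: "sw2 t f = lin_ext (\<lambda>p. f (basisv (fst p)) (basisv (snd p))) t"
  by (simp add: sw2_def lin_ext_def)

lemma linear_map_sw2: "linear_map (\<lambda>t. sw2 t f)"
  unfolding sw2_eq_lin_ext by (rule linear_map_lin_ext)

lemma linear_map_sw2_fun: "(\<And>a b. linear_map (F a b)) \<Longrightarrow> linear_map (\<lambda>z. sw2 t (\<lambda>a b. F a b z))"
  unfolding sw2_eq_lin_ext by (rule linear_map_lin_ext_fun) simp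

lemma linear_map_comp_sw2: "linear_map g \<Longrightarrow> g (sw2 t f) = sw2 t (\<lambda>a b. g (f a b))"
  unfolding sw2_eq_lin_ext by (simp add: linear_map_comp_lin_ext)

lemma sw2_basisv [simp]: "sw2 (basisv p) f = f (basisv (fst p)) (basisv (snd p))"
  by (simp add: sw2_eq_lin_ext)

lemma sw2_cong: "(\<And>a b. f a b = g a b) \<Longrightarrow> sw2 t f = sw2 t g"
  by (simp add: sw2_def)

lemma sw2_tens:
  assumes "\<And>y. linear_map (\<lambda>x. F x y)" and "\<And>x. linear_map (\<lambda>y. F x y)"
  shows "sw2 (tens x y) F = F x y"
  by (rule bilinear_eqI[where G = "\<lambda>x y. sw2 (tens x y) F"])
     (auto intro: assms linear_map_compose[OF linear_map_sw2 linear_map_tens_left]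
        linear_map_compose[OF linear_map_sw2 linear_map_tens_right])

text \<open>\<open>(r \<otimes> r) \<circ> (id \<otimes> \<tau> \<otimes> id) : (H \<otimes> H) \<otimes> (H \<otimes> H) \<rightarrow> H \<otimes> H\<close>, with \<open>\<tau>\<close> the flip.\<close>

definition tensor_square_map :: "(('a \<Rightarrow>\<^sub>0 'k::field) \<Rightarrow> ('a \<Rightarrow>\<^sub>0 'k) \<Rightarrow> ('a \<Rightarrow>\<^sub>0 'k)) \<Rightarrow>
    ('a \<times> 'a \<Rightarrow>\<^sub>0 'k) \<Rightarrow> ('a \<times> 'a \<Rightarrow>\<^sub>0 'k) \<Rightarrow> ('a \<times> 'a \<Rightarrow>\<^sub>0 'k)" where
  "tensor_square_map r D E = sw2 D (\<lambda>a a'. sw2 E (\<lambda>b b'. tens (r a b) (r a' b')))"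

lemma linear_map_tensor_square_map_left: "linear_map (\<lambda>D. tensor_square_map r D E)"
  unfolding tensor_square_map_def by (rule linear_map_sw2)

lemma linear_map_tensor_square_map_right: "linear_map (\<lambda>E. tensor_square_map r D E)"
  unfolding tensor_square_map_def by (rule linear_map_sw2_fun) (rule linear_map_sw2)

lemma tensor_square_map_tens:
  assumes "bilinear_map r"
  shows "tensor_square_map r (tens x y) E = sw2 E (\<lambda>b b'. tens (r x b) (r y b'))"
proof -
  have r: "linear_map (\<lambda>x. r x y)" for y
    using assms by (simp add: bilinear_map_def)
  show ?thesis
    unfolding tensor_square_map_def
    by (rule sw2_tens; rule linear_map_sw2_fun,
        rule linear_map_compose[OF linear_map_tens_left r] linear_map_compose[OF linear_map_tens_right r])
qed

definition sw3 :: "(('a \<Rightarrow>\<^sub>0 'k::field) \<Rightarrow> ('a \<Rightarrow>\<^sub>0 'k) \<Rightarrow> ('a \<Rightarrow>\<^sub>0 'k) \<Rightarrow> ('c \<Rightarrow>\<^sub>0 'k)) \<Rightarrow>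
    ('a \<times> 'a \<times> 'a \<Rightarrow>\<^sub>0 'k) \<Rightarrow> ('c \<Rightarrow>\<^sub>0 'k)" where
  "sw3 G t = lin_ext (\<lambda>q. G (basisv (fst q)) (basisv (fst (snd q))) (basisv (snd (snd q)))) t"

definition sw3' :: "(('a \<Rightarrow>\<^sub>0 'k::field) \<Rightarrow> ('a \<Rightarrow>\<^sub>0 'k) \<Rightarrow> ('a \<Rightarrow>\<^sub>0 'k) \<Rightarrow> ('c \<Rightarrow>\<^sub>0 'k)) \<Rightarrow>
    (('a \<times> 'a) \<times> 'a \<Rightarrow>\<^sub>0 'k) \<Rightarrow> ('c \<Rightarrow>\<^sub>0 'k)" where
  "sw3' G t = lin_ext (\<lambda>q. G (basisv (fst (fst q))) (basisv (snd (fst q))) (basisv (snd q))) t"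

lemma linear_map_sw3: "linear_map (sw3 G)"
  unfolding sw3_def by (rule linear_map_lin_ext)

lemma linear_map_sw3': "linear_map (sw3' G)"
  unfolding sw3'_def by (rule linear_map_lin_ext)

lemma sw3_reassoc: "sw3 G (reassoc T) = sw3' G T"
proof -
  have "reassoc T = lin_ext (\<lambda>q. basisv (fst (fst q), snd (fst q), snd q)) T"
    unfolding reassoc_def by (rule sum_single_eq_lin_ext)
  then have "sw3 G (reassoc T) = lin_ext (\<lambda>q. sw3 G (basisv (fst (fst q), snd (fst q), snd q))) T"
    by (simp only: linear_map_comp_lin_ext[OF linear_map_sw3])
  then show ?thesis
    by (simp add: sw3_def sw3'_def)
qed

locale trilinear =
  fixes G :: "('a \<Rightarrow>\<^sub>0 'k::field) \<Rightarrow> ('a \<Rightarrow>\<^sub>0 'k) \<Rightarrow> ('a \<Rightarrow>\<^sub>0 'k) \<Rightarrow> ('c \<Rightarrow>\<^sub>0 'k)"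
  assumes linear1: "\<And>y z. linear_map (\<lambda>x. G x y z)"
    and linear2: "\<And>x z. linear_map (\<lambda>y. G x y z)"
    and linear3: "\<And>x y. linear_map (\<lambda>z. G x y z)"
begin

lemma sw3'_tens: "sw3' G (tens D b) = sw2 D (\<lambda>c d. G c d b)"
proof (rule bilinear_eqI[where G = "\<lambda>D b. sw3' G (tens D b)"])
  show "linear_map (\<lambda>D. sw3' G (tens D b))" "linear_map (\<lambda>b. sw3' G (tens D b))" for D b
    by (rule linear_map_compose[OF linear_map_sw3' linear_map_tens_left],
        rule linear_map_compose[OF linear_map_sw3' linear_map_tens_right])
  show "linear_map (\<lambda>D. sw2 D (\<lambda>c d. G c d b))" for b by (rule linear_map_sw2)
  show "linear_map (\<lambda>b. sw2 D (\<lambda>c d. G c d b))" for D by (rule linear_map_sw2_fun) (rule linear3)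
qed (simp add: sw3'_def)

lemma sw3_tens: "sw3 G (tens a E) = sw2 E (\<lambda>c d. G a c d)"
proof (rule bilinear_eqI[where G = "\<lambda>a E. sw3 G (tens a E)"])
  show "linear_map (\<lambda>a. sw3 G (tens a E))" "linear_map (\<lambda>E. sw3 G (tens a E))" for a E
    by (rule linear_map_compose[OF linear_map_sw3 linear_map_tens_left],
        rule linear_map_compose[OF linear_map_sw3 linear_map_tens_right])
  show "linear_map (\<lambda>a. sw2 E (\<lambda>c d. G a c d))" for E by (rule linear_map_sw2_fun) (rule linear1)
  show "linear_map (\<lambda>E. sw2 E (\<lambda>c d. G a c d))" for a by (rule linear_map_sw2)
qed (simp add: sw3_def)

end

lemma sw2_coassoc:
  assumes coassoc: "reassoc (sw2 X (\<lambda>a b. tens (\<Delta> a) b)) = sw2 X (\<lambda>a b. tens a (\<Delta> b))"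
    and "trilinear G"
  shows "sw2 X (\<lambda>a b. sw2 (\<Delta> a) (\<lambda>c d. G c d b)) = sw2 X (\<lambda>a b. sw2 (\<Delta> b) (\<lambda>c d. G a c d))"
proof -
  interpret trilinear G by fact
  have "sw2 X (\<lambda>a b. sw2 (\<Delta> a) (\<lambda>c d. G c d b)) = sw3' G (sw2 X (\<lambda>a b. tens (\<Delta> a) b))"
    by (simp add: linear_map_comp_sw2[OF linear_map_sw3'] sw3'_tens)
  also have "\<dots> = sw3 G (sw2 X (\<lambda>a b. tens a (\<Delta> b)))"
    by (simp add: sw3_reassoc[symmetric] coassoc)
  also have "\<dots> = sw2 X (\<lambda>a b. sw2 (\<Delta> b) (\<lambda>c d. G a c d))"
    by (simp add: linear_map_comp_sw2[OF linear_map_sw3] sw3_tens)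
  finally show ?thesis .
qed

locale right_post_hopf =
  fixes mult :: "('b \<Rightarrow>\<^sub>0 'k::field) \<Rightarrow> ('b \<Rightarrow>\<^sub>0 'k) \<Rightarrow> ('b \<Rightarrow>\<^sub>0 'k)"
    and u :: "'b \<Rightarrow>\<^sub>0 'k"
    and \<Delta> :: "('b \<Rightarrow>\<^sub>0 'k) \<Rightarrow> ('b \<times> 'b \<Rightarrow>\<^sub>0 'k)"
    and \<epsilon> :: "('b \<Rightarrow>\<^sub>0 'k) \<Rightarrow> 'k"
    and rhd :: "('b \<Rightarrow>\<^sub>0 'k) \<Rightarrow> ('b \<Rightarrow>\<^sub>0 'k) \<Rightarrow> ('b \<Rightarrow>\<^sub>0 'k)"
  assumes post_hopf: "right_post_hopf_algebra mult u \<Delta> \<epsilon> rhd"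
begin

lemma hopf: "hopf_algebra mult u \<Delta> \<epsilon>"
  using post_hopf by (simp add: right_post_hopf_algebra_def)

lemma linear_map_mult_left: "linear_map (\<lambda>x. mult x y)"
  using hopf by (simp add: hopf_algebra_def bilinear_map_def)

lemma linear_map_mult_right: "linear_map (\<lambda>y. mult x y)"
  using hopf unfolding hopf_algebra_def bilinear_map_def by blast

lemma mult_assoc: "mult (mult x y) z = mult x (mult y z)"
  using hopf by (simp add: hopf_algebra_def)

lemma mult_unit: "mult u x = x" "mult x u = x"
  using hopf by (simp_all add: hopf_algebra_def)

lemma linear_map_Delta: "linear_map \<Delta>"
  using hopf by (simp add: hopf_algebra_def)

lemma linear_functional_eps: "linear_functional \<epsilon>"
  using hopf by (simp add: hopf_algebra_def)

lemma coassoc: "reassoc (sw2 (\<Delta> x) (\<lambda>a b. tens (\<Delta> a) b)) = sw2 (\<Delta> x) (\<lambda>a b. tens a (\<Delta> b))"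
  using hopf by (simp add: hopf_algebra_def)

lemma counit: "sw2 (\<Delta> x) (\<lambda>a b. vsmul (\<epsilon> a) b) = x" "sw2 (\<Delta> x) (\<lambda>a b. vsmul (\<epsilon> b) a) = x"
  using hopf by (simp_all add: hopf_algebra_def)

lemma Delta_unit: "\<Delta> u = tens u u"
  using hopf by (simp add: hopf_algebra_def)

lemma eps_unit: "\<epsilon> u = 1"
  using hopf by (simp add: hopf_algebra_def)

lemma eps_vsmul: "\<epsilon> (vsmul c x) = c * \<epsilon> x"
  using linear_functional_eps by (simp add: linear_functional_def)

lemma left_antipode:
  obtains S where "linear_map S" "\<And>x. sw2 (\<Delta> x) (\<lambda>a b. mult (S a) b) = vsmul (\<epsilon> x) u"
proof -
  from hopf obtain S where "linear_map S" "\<forall>x. sw2 (\<Delta> x) (\<lambda>a b. mult (S a) b) = vsmul (\<epsilon> x) u"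
    unfolding hopf_algebra_def by auto
  then show ?thesis using that by blast
qed

lemma bilinear_map_rhd: "bilinear_map rhd"
  using post_hopf by (simp add: right_post_hopf_algebra_def)

lemma linear_map_rhd_left: "linear_map (\<lambda>x. rhd x y)"
  using post_hopf by (simp add: right_post_hopf_algebra_def bilinear_map_def)

lemma linear_map_rhd_right: "linear_map (\<lambda>y. rhd x y)"
  using post_hopf unfolding right_post_hopf_algebra_def bilinear_map_def by blast

lemma Delta_rhd: "\<Delta> (rhd x y) = tensor_square_map rhd (\<Delta> x) (\<Delta> y)"
  using post_hopf by (simp add: right_post_hopf_algebra_def tensor_square_map_def)

lemma eps_rhd: "\<epsilon> (rhd x y) = \<epsilon> x * \<epsilon> y"
  using post_hopf by (simp add: right_post_hopf_algebra_def)

lemma rhd_mult: "rhd (mult x y) z = sw2 (\<Delta> z) (\<lambda>c d. mult (rhd x c) (rhd y d))"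
  using post_hopf by (simp add: right_post_hopf_algebra_def)

lemma rhd_vsmul_left: "rhd (vsmul c x) y = vsmul c (rhd x y)"
  using linear_map_vsmul[OF linear_map_rhd_left] .

lemma rhd_vsmul_right: "rhd x (vsmul c y) = vsmul c (rhd x y)"
  using linear_map_vsmul[OF linear_map_rhd_right] .

lemma Delta_unit_rhd: "\<Delta> (rhd u z) = sw2 (\<Delta> z) (\<lambda>c d. tens (rhd u c) (rhd u d))"
  unfolding Delta_rhd Delta_unit by (rule tensor_square_map_tens[OF bilinear_map_rhd])

lemma unit_rhd_convolution_idempotent: "rhd u z = sw2 (\<Delta> z) (\<lambda>c d. mult (rhd u c) (rhd u d))"
  using rhd_mult[of u u z] unfolding mult_unit(1) .

lemma antipode_unit_rhd:
  assumes "linear_map S" "\<And>x. sw2 (\<Delta> x) (\<lambda>a b. mult (S a) b) = vsmul (\<epsilon> x) u"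
  shows "sw2 (\<Delta> z) (\<lambda>c d. mult (S (rhd u c)) (rhd u d)) = vsmul (\<epsilon> z) u"
proof -
  have "vsmul (\<epsilon> z) u = sw2 (\<Delta> (rhd u z)) (\<lambda>a b. mult (S a) b)"
    by (simp add: assms(2) eps_rhd eps_unit)
  also have "\<dots> = sw2 (\<Delta> z) (\<lambda>c d. sw2 (tens (rhd u c) (rhd u d)) (\<lambda>a b. mult (S a) b))"
    unfolding Delta_unit_rhd by (rule linear_map_comp_sw2[OF linear_map_sw2])
  also have "\<dots> = sw2 (\<Delta> z) (\<lambda>c d. mult (S (rhd u c)) (rhd u d))"
    by (intro sw2_cong sw2_tens linear_map_mult_right
        linear_map_compose[OF linear_map_mult_left assms(1)])
  finally show ?thesis by simp
qed

text \<open>\<open>f = (1 \<rhd> -)\<close> is idempotent for convolution and has the convolution left inverse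
  \<open>S \<circ> f\<close>, so it equals the convolution unit \<open>z \<mapsto> \<epsilon>(z) 1\<close>:
  \<open>f = (S \<circ> f) * f * f = (S \<circ> f) * f = \<epsilon> 1\<close>.\<close>

lemma unit_rhd: "rhd u z = vsmul (\<epsilon> z) u"
proof -
  obtain S where S: "linear_map S" "\<And>x. sw2 (\<Delta> x) (\<lambda>a b. mult (S a) b) = vsmul (\<epsilon> x) u"
    by (fact left_antipode)
  let ?f = "rhd u"
  have f: "linear_map ?f" by (rule linear_map_rhd_right)
  have trilinear: "trilinear (\<lambda>c d b. mult (S (?f c)) (mult (?f d) (?f b)))"
    by unfold_locales
      (rule linear_map_compose[OF linear_map_mult_left linear_map_compose[OF S(1) f]]
        linear_map_compose[OF linear_map_mult_right linear_map_compose[OF linear_map_mult_left f]]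
        linear_map_compose[OF linear_map_mult_right linear_map_compose[OF linear_map_mult_right f]])+
  have "?f z = ?f (sw2 (\<Delta> z) (\<lambda>a b. vsmul (\<epsilon> a) b))"
    by (simp only: counit)
  also have "\<dots> = sw2 (\<Delta> z) (\<lambda>a b. vsmul (\<epsilon> a) (?f b))"
    by (simp only: linear_map_comp_sw2[OF f] linear_map_vsmul[OF f])
  also have "\<dots> = sw2 (\<Delta> z) (\<lambda>a b. mult (sw2 (\<Delta> a) (\<lambda>c d. mult (S (?f c)) (?f d))) (?f b))"
    by (simp only: antipode_unit_rhd[OF S] linear_map_vsmul[OF linear_map_mult_left] mult_unit)
  also have "\<dots> = sw2 (\<Delta> z) (\<lambda>a b. sw2 (\<Delta> a) (\<lambda>c d. mult (S (?f c)) (mult (?f d) (?f b))))"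
    by (rule sw2_cong) (simp add: linear_map_comp_sw2[OF linear_map_mult_left] mult_assoc)
  also have "\<dots> = sw2 (\<Delta> z) (\<lambda>a b. sw2 (\<Delta> b) (\<lambda>c d. mult (S (?f a)) (mult (?f c) (?f d))))"
    by (rule sw2_coassoc[OF coassoc trilinear])
  also have "\<dots> = sw2 (\<Delta> z) (\<lambda>a b. mult (S (?f a)) (?f b))"
    by (rule sw2_cong, subst (2) unit_rhd_convolution_idempotent)
       (simp add: linear_map_comp_sw2[OF linear_map_mult_right])
  also have "\<dots> = vsmul (\<epsilon> z) u"
    by (rule antipode_unit_rhd[OF S])
  finally show ?thesis .
qed

end

definition cons_tensor :: "('b \<Rightarrow>\<^sub>0 'k::field) \<Rightarrow> ('b list \<Rightarrow>\<^sub>0 'k) \<Rightarrow> ('b list \<Rightarrow>\<^sub>0 'k)" where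
  "cons_tensor a R = lin_ext (\<lambda>i. lin_ext (\<lambda>w. basisv (i # w)) R) a"

definition cons2_tensor :: "('b \<times> 'b \<Rightarrow>\<^sub>0 'k::field) \<Rightarrow> ('b list \<Rightarrow>\<^sub>0 'k) \<Rightarrow> ('b list \<Rightarrow>\<^sub>0 'k)" where
  "cons2_tensor D R = lin_ext (\<lambda>p. lin_ext (\<lambda>w. basisv (fst p # snd p # w)) R) D"

lemma linear_map_cons_tensor_left: "linear_map (\<lambda>a. cons_tensor a R)"
  unfolding cons_tensor_def by (rule linear_map_lin_ext)

lemma linear_map_cons_tensor_right: "linear_map (\<lambda>R. cons_tensor a R)"
  unfolding cons_tensor_def by (rule linear_map_lin_ext_fun) (rule linear_map_lin_ext)

lemma linear_map_cons2_tensor_left: "linear_map (\<lambda>D. cons2_tensor D R)"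
  unfolding cons2_tensor_def by (rule linear_map_lin_ext)

lemma linear_map_cons2_tensor_right: "linear_map (\<lambda>R. cons2_tensor D R)"
  unfolding cons2_tensor_def by (rule linear_map_lin_ext_fun) (rule linear_map_lin_ext)

lemma cons_tensor_basisv [simp]: "cons_tensor (basisv i) (basisv w) = basisv (i # w)"
  by (simp add: cons_tensor_def)

lemma cons2_tensor_basisv [simp]: "cons2_tensor (basisv p) (basisv w) = basisv (fst p # snd p # w)"
  by (simp add: cons2_tensor_def)

lemma cons2_tensor_tens: "cons2_tensor (tens a b) R = cons_tensor a (cons_tensor b R)"
proof (rule bilinear_eqI[where G = "\<lambda>a b. cons2_tensor (tens a b) R"])
  show "cons2_tensor (tens (basisv i) (basisv j)) R = cons_tensor (basisv i) (cons_tensor (basisv j) R)"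
    for i j
    by (rule linear_map_eqI[OF linear_map_cons2_tensor_right
          linear_map_compose[OF linear_map_cons_tensor_right linear_map_cons_tensor_right]]) simp
qed (rule linear_map_compose[OF linear_map_cons2_tensor_left linear_map_tens_left]
       linear_map_compose[OF linear_map_cons2_tensor_left linear_map_tens_right]
       linear_map_cons_tensor_left
       linear_map_compose[OF linear_map_cons_tensor_right linear_map_cons_tensor_left])+

text \<open>\<open>letterwise r\<close> is \<open>r\<^sup>\<otimes>\<^sup>m\<close> on pairs of basis words of length \<open>m\<close>; pairs of words of
  different lengths are sent to \<open>0\<close> and never occur below.\<close>

fun letterwise :: "(('b \<Rightarrow>\<^sub>0 'k::field) \<Rightarrow> ('b \<Rightarrow>\<^sub>0 'k) \<Rightarrow> ('b \<Rightarrow>\<^sub>0 'k)) \<Rightarrow>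
    'b list \<Rightarrow> 'b list \<Rightarrow> ('b list \<Rightarrow>\<^sub>0 'k)" where
  "letterwise r (i # w) (j # v) = cons_tensor (r (basisv i) (basisv j)) (letterwise r w v)"
| "letterwise r [] [] = basisv []"
| "letterwise r _ _ = 0"

definition tensor_power_map :: "(('b \<Rightarrow>\<^sub>0 'k::field) \<Rightarrow> ('b \<Rightarrow>\<^sub>0 'k) \<Rightarrow> ('b \<Rightarrow>\<^sub>0 'k)) \<Rightarrow>
    ('b list \<Rightarrow>\<^sub>0 'k) \<Rightarrow> ('b list \<Rightarrow>\<^sub>0 'k) \<Rightarrow> ('b list \<Rightarrow>\<^sub>0 'k)" where
  "tensor_power_map r T Y = lin_ext (\<lambda>w. lin_ext (\<lambda>v. letterwise r w v) Y) T"

lemma linear_map_tensor_power_map_left: "linear_map (\<lambda>T. tensor_power_map r T Y)"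
  unfolding tensor_power_map_def by (rule linear_map_lin_ext)

lemma linear_map_tensor_power_map_right: "linear_map (\<lambda>Y. tensor_power_map r T Y)"
  unfolding tensor_power_map_def by (rule linear_map_lin_ext_fun) (rule linear_map_lin_ext)

lemma tensor_power_map_basisv [simp]: "tensor_power_map r (basisv w) (basisv v) = letterwise r w v"
  by (simp add: tensor_power_map_def)

lemma tensor_power_map_cons_tensor:
  assumes "bilinear_map r"
  shows "tensor_power_map r (cons_tensor a T) (cons_tensor b Y) = cons_tensor (r a b) (tensor_power_map r T Y)"
proof -
  have r: "linear_map (\<lambda>a. r a b)" "linear_map (\<lambda>b. r a b)" for a b
    using assms by (simp_all add: bilinear_map_def)
  have basis: "tensor_power_map r (cons_tensor (basisv i) T) (cons_tensor (basisv j) Y) =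
      cons_tensor (r (basisv i) (basisv j)) (tensor_power_map r T Y)" for i j
    by (rule bilinear_eqI[where G = "\<lambda>T Y. tensor_power_map r (cons_tensor (basisv i) T) (cons_tensor (basisv j) Y)"],
        (rule linear_map_compose[OF linear_map_tensor_power_map_left linear_map_cons_tensor_right]
          linear_map_compose[OF linear_map_tensor_power_map_right linear_map_cons_tensor_right]
          linear_map_compose[OF linear_map_cons_tensor_right linear_map_tensor_power_map_left]
          linear_map_compose[OF linear_map_cons_tensor_right linear_map_tensor_power_map_right])+)
       simp
  show ?thesis
    by (rule bilinear_eqI[where G = "\<lambda>a b. tensor_power_map r (cons_tensor a T) (cons_tensor b Y)"],
        (rule linear_map_compose[OF linear_map_tensor_power_map_left linear_map_cons_tensor_left]
          linear_map_compose[OF linear_map_tensor_power_map_right linear_map_cons_tensor_left]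
          linear_map_compose[OF linear_map_cons_tensor_left r(1)]
          linear_map_compose[OF linear_map_cons_tensor_left r(2)])+)
       (rule basis)
qed

lemma tensor_power_map_cons2_tensor:
  "tensor_power_map r (cons2_tensor D T) (cons2_tensor E Y) =
    cons2_tensor (tensor_square_map r D E) (tensor_power_map r T Y)"
proof -
  have basis: "tensor_power_map r (cons2_tensor (basisv p) T) (cons2_tensor (basisv q) Y) =
      cons2_tensor (tensor_square_map r (basisv p) (basisv q)) (tensor_power_map r T Y)" for p q
    by (rule bilinear_eqI[where G = "\<lambda>T Y. tensor_power_map r (cons2_tensor (basisv p) T) (cons2_tensor (basisv q) Y)"],
        (rule linear_map_compose[OF linear_map_tensor_power_map_left linear_map_cons2_tensor_right]
          linear_map_compose[OF linear_map_tensor_power_map_right linear_map_cons2_tensor_right]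
          linear_map_compose[OF linear_map_cons2_tensor_right linear_map_tensor_power_map_left]
          linear_map_compose[OF linear_map_cons2_tensor_right linear_map_tensor_power_map_right])+)
       (simp add: tensor_square_map_def cons2_tensor_tens)
  show ?thesis
    by (rule bilinear_eqI[where G = "\<lambda>D E. tensor_power_map r (cons2_tensor D T) (cons2_tensor E Y)"],
        (rule linear_map_compose[OF linear_map_tensor_power_map_left linear_map_cons2_tensor_left]
          linear_map_compose[OF linear_map_tensor_power_map_right linear_map_cons2_tensor_left]
          linear_map_compose[OF linear_map_cons2_tensor_left linear_map_tensor_square_map_left]
          linear_map_compose[OF linear_map_cons2_tensor_left linear_map_tensor_square_map_right])+)
       (rule basis)
qed

text \<open>The
  value on the empty word (\<open>hd [] = undefined\<close>) is junk, so only tensors vanishing at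
  \<open>[]\<close> are fed to it.\<close>

definition split_first :: "(('b \<Rightarrow>\<^sub>0 'k::field) \<Rightarrow> ('b \<times> 'b \<Rightarrow>\<^sub>0 'k)) \<Rightarrow> ('b list \<Rightarrow>\<^sub>0 'k) \<Rightarrow> ('b list \<Rightarrow>\<^sub>0 'k)" where
  "split_first h T = lin_ext (\<lambda>w. cons2_tensor (h (basisv (hd w))) (basisv (tl w))) T"

lemma linear_map_split_first: "linear_map (split_first h)"
  unfolding split_first_def by (rule linear_map_lin_ext)

lemma split_first_basisv: "split_first h (basisv (i # w)) = cons2_tensor (h (basisv i)) (basisv w)"
  by (simp add: split_first_def)

lemma split_first_cons_tensor:
  assumes "linear_map h"
  shows "split_first h (cons_tensor a R) = cons2_tensor (h a) R"
  by (rule bilinear_eqI[where G = "\<lambda>a R. split_first h (cons_tensor a R)"])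
     (simp_all add: split_first_basisv linear_map_cons2_tensor_right
       linear_map_compose[OF linear_map_split_first linear_map_cons_tensor_left]
       linear_map_compose[OF linear_map_split_first linear_map_cons_tensor_right]
       linear_map_compose[OF linear_map_cons2_tensor_left assms])

lemma lookup_cons_tensor_Nil: "Poly_Mapping.lookup (cons_tensor a R) [] = 0"
  unfolding cons_tensor_def by (intro lookup_lin_ext_eq_0) (simp add: basisv_def lookup_single)

lemma lookup_cons2_tensor_Nil: "Poly_Mapping.lookup (cons2_tensor D R) [] = 0"
  unfolding cons2_tensor_def by (intro lookup_lin_ext_eq_0) (simp add: basisv_def lookup_single)

lemma lookup_split_first_Nil: "Poly_Mapping.lookup (split_first h T) [] = 0"
  unfolding split_first_def by (intro lookup_lin_ext_eq_0 lookup_cons2_tensor_Nil)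

lemma split_first_tensor_power_map:
  assumes R: "linear_map R" and R_r: "\<And>a b. R (r a b) = tensor_square_map r (R a) (D b)"
    and T: "Poly_Mapping.lookup T [] = 0" and Y: "Poly_Mapping.lookup Y [] = 0"
  shows "split_first R (tensor_power_map r T Y) = tensor_power_map r (split_first R T) (split_first D Y)"
proof -
  have "split_first R (tensor_power_map r T Y) = lin_ext (\<lambda>w. lin_ext (\<lambda>v. split_first R (letterwise r w v)) Y) T"
    by (simp only: tensor_power_map_def linear_map_comp_lin_ext[OF linear_map_split_first])
  also have "\<dots> = lin_ext (\<lambda>w. lin_ext (\<lambda>v.
      tensor_power_map r (split_first R (basisv w)) (split_first D (basisv v))) Y) T"
  proof (intro lin_ext_cong)
    fix w v assume "w \<in> Poly_Mapping.keys T" "v \<in> Poly_Mapping.keys Y"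
    with T Y obtain i w' j v' where "w = i # w'" "v = j # v'"
      by (cases w; cases v) (auto simp: in_keys_iff)
    then show "split_first R (letterwise r w v) =
        tensor_power_map r (split_first R (basisv w)) (split_first D (basisv v))"
      by (simp add: split_first_basisv split_first_cons_tensor[OF R] tensor_power_map_cons2_tensor R_r)
  qed
  also have "\<dots> = tensor_power_map r (split_first R T) (split_first D Y)"
    by (rule bilinear_eq_lin_ext[symmetric])
       (rule linear_map_compose[OF linear_map_tensor_power_map_left linear_map_split_first]
         linear_map_compose[OF linear_map_tensor_power_map_right linear_map_split_first])+
  finally show ?thesis .
qed

fun iter_coprod :: "(('b \<Rightarrow>\<^sub>0 'k::field) \<Rightarrow> ('b \<times> 'b \<Rightarrow>\<^sub>0 'k)) \<Rightarrow> nat \<Rightarrow> ('b \<Rightarrow>\<^sub>0 'k) \<Rightarrow> ('b list \<Rightarrow>\<^sub>0 'k)" where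
  "iter_coprod \<Delta> 0 y = cons_tensor y (basisv [])"
| "iter_coprod \<Delta> (Suc k) y = split_first \<Delta> (iter_coprod \<Delta> k y)"

lemma lookup_iter_coprod_Nil: "Poly_Mapping.lookup (iter_coprod \<Delta> k y) [] = 0"
  by (cases k) (simp_all add: lookup_cons_tensor_Nil lookup_split_first_Nil)

lemma iter_red_coprod_0: "iter_red_coprod u \<Delta> \<epsilon> 0 x = cons_tensor (rho_map u \<epsilon> x) (basisv [])"
  by (simp add: sum_single_eq_lin_ext cons_tensor_def)

lemma iter_red_coprod_Suc:
  "iter_red_coprod u \<Delta> \<epsilon> (Suc k) x = split_first (red_coprod u \<Delta> \<epsilon>) (iter_red_coprod u \<Delta> \<epsilon> k x)"
proof -
  have "iter_red_coprod u \<Delta> \<epsilon> (Suc k) x = lin_ext (\<lambda>w. lin_ext (\<lambda>p. basisv (fst p # snd p # tl w))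
      (red_coprod u \<Delta> \<epsilon> (basisv (hd w)))) (iter_red_coprod u \<Delta> \<epsilon> k x)"
    by (simp only: iter_red_coprod.simps Let_def sum_single_eq_lin_ext lin_ext_def)
  then show ?thesis by (simp add: split_first_def cons2_tensor_def)
qed

lemma lookup_iter_red_coprod_Nil: "Poly_Mapping.lookup (iter_red_coprod u \<Delta> \<epsilon> k x) [] = 0"
  by (cases k) (simp_all only: iter_red_coprod_0 iter_red_coprod_Suc
      lookup_cons_tensor_Nil lookup_split_first_Nil)

context right_post_hopf
begin

lemma linear_map_red_coprod: "linear_map (red_coprod u \<Delta> \<epsilon>)"
  unfolding red_coprod_def[abs_def]
  by (intro linear_map_plus linear_map_minus linear_map_Delta linear_map_tens_left
      linear_map_tens_right linear_map_vsmul_functional linear_functional_eps)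

lemma red_coprod_rhd:
  "red_coprod u \<Delta> \<epsilon> (rhd a b) = tensor_square_map rhd (red_coprod u \<Delta> \<epsilon> a) (\<Delta> b)"
proof -
  note tsm = tensor_square_map_tens[OF bilinear_map_rhd]
  have unit_left: "tensor_square_map rhd (tens u a) (\<Delta> b) = tens u (rhd a b)"
  proof -
    have "tensor_square_map rhd (tens u a) (\<Delta> b) = sw2 (\<Delta> b) (\<lambda>c d. tens u (rhd a (vsmul (\<epsilon> c) d)))"
      by (simp add: tsm unit_rhd tens_vsmul_left tens_vsmul_right rhd_vsmul_right)
    also have "\<dots> = tens u (rhd a b)"
      by (simp only: linear_map_comp_sw2[OF linear_map_compose[OF linear_map_tens_right linear_map_rhd_right],
          symmetric] counit)
    finally show ?thesis .
  qed
  have unit_right: "tensor_square_map rhd (tens a u) (\<Delta> b) = tens (rhd a b) u"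
  proof -
    have "tensor_square_map rhd (tens a u) (\<Delta> b) = sw2 (\<Delta> b) (\<lambda>c d. tens (rhd a (vsmul (\<epsilon> d) c)) u)"
      by (simp add: tsm unit_rhd tens_vsmul_left tens_vsmul_right rhd_vsmul_right)
    also have "\<dots> = tens (rhd a b) u"
      by (simp only: linear_map_comp_sw2[OF linear_map_compose[OF linear_map_tens_left linear_map_rhd_right],
          symmetric] counit)
    finally show ?thesis .
  qed
  have unit_unit: "tensor_square_map rhd (tens u u) (\<Delta> b) = vsmul (\<epsilon> b) (tens u u)"
  proof -
    have "tensor_square_map rhd (tens u u) (\<Delta> b) = sw2 (\<Delta> b) (\<lambda>c d. vsmul (\<epsilon> (vsmul (\<epsilon> c) d)) (tens u u))"
      by (simp add: tsm unit_rhd tens_vsmul_left tens_vsmul_right eps_vsmul mult.commute)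
    also have "\<dots> = vsmul (\<epsilon> b) (tens u u)"
      by (simp only: linear_map_comp_sw2[OF linear_map_vsmul_functional[OF linear_functional_eps],
          symmetric] counit)
    finally show ?thesis .
  qed
  show ?thesis
    by (simp only: red_coprod_def linear_map_add[OF linear_map_tensor_square_map_left]
        linear_map_diff[OF linear_map_tensor_square_map_left]
        linear_map_vsmul[OF linear_map_tensor_square_map_left]
        Delta_rhd[symmetric] unit_left unit_right unit_unit eps_rhd vsmul_vsmul)
qed

lemma rho_map_rhd: "rho_map u \<epsilon> (rhd x y) = rhd (rho_map u \<epsilon> x) y"
  by (simp add: rho_map_def linear_map_diff[OF linear_map_rhd_left] rhd_vsmul_left unit_rhd eps_rhd)

lemma iter_red_coprod_rhd:
  "iter_red_coprod u \<Delta> \<epsilon> k (rhd x y) =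
    tensor_power_map rhd (iter_red_coprod u \<Delta> \<epsilon> k x) (iter_coprod \<Delta> k y)"
proof (induct k)
  case 0
  show ?case
    by (simp only: iter_red_coprod_0 iter_coprod.simps rho_map_rhd letterwise.simps
        tensor_power_map_cons_tensor[OF bilinear_map_rhd] tensor_power_map_basisv)
next
  case (Suc k)
  show ?case
    by (simp only: iter_red_coprod_Suc iter_coprod.simps Suc split_first_tensor_power_map[OF
        linear_map_red_coprod red_coprod_rhd lookup_iter_red_coprod_Nil lookup_iter_coprod_Nil])
qed

end

theorem lemma3p3:
  fixes mult :: "('b \<Rightarrow>\<^sub>0 'k::field) \<Rightarrow> ('b \<Rightarrow>\<^sub>0 'k) \<Rightarrow> ('b \<Rightarrow>\<^sub>0 'k)"
    and u :: "'b \<Rightarrow>\<^sub>0 'k"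
    and \<Delta> :: "('b \<Rightarrow>\<^sub>0 'k) \<Rightarrow> ('b \<times> 'b \<Rightarrow>\<^sub>0 'k)"
    and \<epsilon> :: "('b \<Rightarrow>\<^sub>0 'k) \<Rightarrow> 'k"
    and rhd :: "('b \<Rightarrow>\<^sub>0 'k) \<Rightarrow> ('b \<Rightarrow>\<^sub>0 'k) \<Rightarrow> ('b \<Rightarrow>\<^sub>0 'k)"
  assumes "right_post_hopf_algebra mult u \<Delta> \<epsilon> rhd"
    and "coalg_connected u \<Delta> \<epsilon>"
  shows "\<forall>n. \<forall>x \<in> coradical_filt u \<Delta> \<epsilon> n. \<forall>y. rhd x y \<in> coradical_filt u \<Delta> \<epsilon> n"
proof (intro allI ballI)
  interpret right_post_hopf mult u \<Delta> \<epsilon> rhd by standard (fact assms(1))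
  fix n x y
  assume "x \<in> coradical_filt u \<Delta> \<epsilon> n"
  then have "iter_red_coprod u \<Delta> \<epsilon> n x = 0" by (simp add: coradical_filt_def)
  then show "rhd x y \<in> coradical_filt u \<Delta> \<epsilon> n"
    by (simp add: coradical_filt_def iter_red_coprod_rhd tensor_power_map_def)
qed

end
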